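(* For any integer $d\ge5$ with $d\equiv1\pmod4$ and any $\beta^*\ge d\ln d$, there exists an RBM of width $\beta^*$ with $d$ observed variables and one latent variable such that the width $\gamma$ of the MRF of the observed variables satisfies \[\gamma\ge\beta^*\cdot\frac{2^{(d-1)/2}}{4d^{3/2}}.\]
   Context: RBM: $\mathbb{P}(X=x,Y=y)\propto\exp(x^TJy+h^Tx+g^Ty)$ over observed $X\in\{-1,1\}^n$ and latent $Y\in\{-1,1\}^m$, $J\in\mathbb{R}^{n\times m}$, $h\in\mathbb{R}^n$, $g\in\mathbb{R}^m$. Its width is $\beta^*:=\max\big(\max_{i}\sum_{j}|J_{i,j}|+|h_i|,\ \max_{j}\sum_{i}|J_{i,j}|+|g_j|\big)$. The marginal of $X$ is $\propto\exp(f(x))$, $f(x)=\sum_j\rho(J_j\cdot x+g_j)+h^Tx$, $\rho(t)=\log(e^t+e^{-t})$, $J_j$ the $j$-th column of $J$; writing $f=\sum_{T\subseteq[n]}\hat f(T)\prod_{i\in T}x_i$, the MRF width is $\gamma:=\max_{u\in[n]}\sum_{T\ni u}|\hat f(T)|$. *)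

theory Defs
  imports Complex_Main "HOL-Library.FuncSet"
begin

text \<open>Observed configurations x in {-1,1}^n, indexed by {0..<n}; latent index set {0..<m}.
  An RBM is given by J (n x m), h (length n), g (length m), as functions on naturals.\<close>

definition hcube :: "nat \<Rightarrow> (nat \<Rightarrow> real) set" where
  "hcube n = {0..<n} \<rightarrow>\<^sub>E {-1, 1}"

definition rho :: "real \<Rightarrow> real" where
  "rho t = ln (exp t + exp (- t))"

definition rbm_width ::
  "nat \<Rightarrow> nat \<Rightarrow> (nat \<Rightarrow> nat \<Rightarrow> real) \<Rightarrow> (nat \<Rightarrow> real) \<Rightarrow> (nat \<Rightarrow> real) \<Rightarrow> real" where
  "rbm_width n m J h g =
     max (Max ((\<lambda>i. (\<Sum>j<m. \<bar>J i j\<bar>) + \<bar>h i\<bar>) ` {..<n}))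
         (Max ((\<lambda>j. (\<Sum>i<n. \<bar>J i j\<bar>) + \<bar>g j\<bar>) ` {..<m}))"

text \<open>The function f with P(X = x) proportional to exp (f x).\<close>
definition rbm_marginal ::
  "nat \<Rightarrow> nat \<Rightarrow> (nat \<Rightarrow> nat \<Rightarrow> real) \<Rightarrow> (nat \<Rightarrow> real) \<Rightarrow> (nat \<Rightarrow> real) \<Rightarrow> (nat \<Rightarrow> real) \<Rightarrow> real" where
  "rbm_marginal n m J h g x =
     (\<Sum>j<m. rho ((\<Sum>i<n. J i j * x i) + g j)) + (\<Sum>i<n. h i * x i)"

definition fourier_coeff :: "nat \<Rightarrow> ((nat \<Rightarrow> real) \<Rightarrow> real) \<Rightarrow> nat set \<Rightarrow> real" where
  "fourier_coeff n f T = (\<Sum>x\<in>hcube n. f x * (\<Prod>i\<in>T. x i)) / 2 ^ n"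

definition mrf_width :: "nat \<Rightarrow> ((nat \<Rightarrow> real) \<Rightarrow> real) \<Rightarrow> real" where
  "mrf_width n f =
     Max ((\<lambda>u. \<Sum>T\<in>{T. T \<subseteq> {0..<n} \<and> u \<in> T}. \<bar>fourier_coeff n f T\<bar>) ` {0..<n})"

end

theory Submission
  imports Defs
begin

text \<open>Couple one latent unit with the same weight w = \<beta>/d to all d = 2n + 1 observed spins and
  use no biases, so that f(x) = \<rho>(w \<Sum>i. x(i)). Weighting the Fourier coefficients of f at the
  sets T \<ni> u by the phases i^(|T| - 1) turns their sum into
  2^(-d) \<Sum>x. f(x) x(u) \<Prod>j \<noteq> u. (1 + i x(j)), whose modulus bounds the width at u from below.
  Summing out x(u) leaves \<rho>(w(s + 1)) - \<rho>(w(s - 1)) with s = \<Sum>j \<noteq> u. x(j), which is 2w sgn(s)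
  up to an error e^(-2w) \<le> d^(-2). Grouping the cube by s gives a binomial transform; for sgn it
  is exactly i r(n) with r(n + 1) = 4 r(n) + 2^(n + 2) C(2n, n) \<ge> 2^(n + 2) 4^n / \<surd>(4n + 1), while
  the error contributes at most 8^n e^(-2w), which is negligible once w \<ge> ln d.\<close>

section \<open>Hypercube sums and the binomial transform\<close>

lemma sum_hcube_Suc:
  fixes F :: "(nat \<Rightarrow> real) \<Rightarrow> 'a::comm_monoid_add"
  shows "(\<Sum>x\<in>hcube (Suc m). F x) = (\<Sum>y\<in>hcube m. F (y(m := 1)) + F (y(m := -1)))"
proof -
  let ?upd = "\<lambda>(b, y). y(m := b)"
  have "{0..<Suc m} = insert m {0..<m}" by auto
  then have img: "hcube (Suc m) = ?upd ` ({-1, 1} \<times> hcube m)"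
    and inj: "inj_on ?upd ({-1, 1} \<times> hcube m)"
    unfolding hcube_def using inj_combinator[of m "{0..<m}" "\<lambda>_. {-1, 1}"]
    by (simp_all add: PiE_insert_eq)
  have "(\<Sum>x\<in>hcube (Suc m). F x) = (\<Sum>(b, y)\<in>{-1, 1} \<times> hcube m. F (y(m := b)))"
    by (rule sum.reindex_cong[OF inj img]) auto
  also have "\<dots> = (\<Sum>y\<in>hcube m. F (y(m := 1)) + F (y(m := -1)))"
    by (simp add: sum.cartesian_product[symmetric] sum.distrib add.commute)
  finally show ?thesis .
qed

lemma sum_lessThan_fun_upd_self:
  fixes m :: nat
  shows "(\<Sum>j<m. F ((y(m := b)) j)) = (\<Sum>j<m. F (y j))"
  by (intro sum.cong) auto

lemma prod_lessThan_fun_upd_self: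
  fixes m :: nat
  shows "(\<Prod>j<m. F ((y(m := b)) j)) = (\<Prod>j<m. F (y j))"
  by (intro prod.cong) auto

definition binom_transform :: "nat \<Rightarrow> (real \<Rightarrow> complex) \<Rightarrow> complex" where
  "binom_transform m H =
     (\<Sum>p\<le>m. of_nat (m choose p) * (1 + \<i>) ^ p * (1 - \<i>) ^ (m - p) * H (2 * real p - real m))"

lemma binom_transform_Suc:
  "binom_transform (Suc m) H =
     (1 + \<i>) * binom_transform m (\<lambda>s. H (s + 1)) + (1 - \<i>) * binom_transform m (\<lambda>s. H (s - 1))"
proof -
  define g where "g p = of_nat (m choose p) * (1 + \<i>) ^ p * (1 - \<i>) ^ (Suc m - p) * H (2 * real p - real (Suc m))" for p
  have "binom_transform (Suc m) H = g 0 + (\<Sum>p\<le>m. g (Suc p))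
      + (\<Sum>p\<le>m. of_nat (m choose p) * (1 + \<i>) ^ Suc p * (1 - \<i>) ^ (m - p) * H (2 * real p - real m + 1))"
    unfolding binom_transform_def g_def
    by (subst sum.atMost_Suc_shift) (simp add: sum.distrib algebra_simps)
  also have "g 0 + (\<Sum>p\<le>m. g (Suc p)) = (\<Sum>p\<le>m. g p)"
    by (subst sum.atMost_Suc_shift[symmetric]) (simp add: g_def)
  also have "\<dots> = (1 - \<i>) * binom_transform m (\<lambda>s. H (s - 1))"
    unfolding binom_transform_def sum_distrib_left g_def
    by (intro sum.cong) (auto simp: Suc_diff_le algebra_simps)
  also have "(\<Sum>p\<le>m. of_nat (m choose p) * (1 + \<i>) ^ Suc p * (1 - \<i>) ^ (m - p) * H (2 * real p - real m + 1))
      = (1 + \<i>) * binom_transform m (\<lambda>s. H (s + 1))"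
    unfolding binom_transform_def sum_distrib_left by (intro sum.cong) (auto simp: algebra_simps)
  finally show ?thesis by (simp add: algebra_simps)
qed

lemma sum_hcube_eq_binom_transform:
  "(\<Sum>y\<in>hcube m. H (\<Sum>j<m. y j) * (\<Prod>j<m. 1 + \<i> * of_real (y j))) = binom_transform m H"
proof (induction m arbitrary: H)
  case 0
  have "hcube 0 = {\<lambda>_. undefined}" unfolding hcube_def by simp
  then show ?case by (simp add: binom_transform_def)
next
  case (Suc m)
  have "(\<Sum>y\<in>hcube (Suc m). H (\<Sum>j<Suc m. y j) * (\<Prod>j<Suc m. 1 + \<i> * of_real (y j)))
    = (\<Sum>y\<in>hcube m. (1 + \<i>) * (H ((\<Sum>j<m. y j) + 1) * (\<Prod>j<m. 1 + \<i> * of_real (y j)))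
        + (1 - \<i>) * (H ((\<Sum>j<m. y j) - 1) * (\<Prod>j<m. 1 + \<i> * of_real (y j))))"
    unfolding sum_hcube_Suc
    by (simp add: sum_lessThan_fun_upd_self prod_lessThan_fun_upd_self algebra_simps)
  also have "\<dots> = (1 + \<i>) * binom_transform m (\<lambda>s. H (s + 1)) + (1 - \<i>) * binom_transform m (\<lambda>s. H (s - 1))"
    using Suc.IH[of "\<lambda>s. H (s + 1)"] Suc.IH[of "\<lambda>s. H (s - 1)"]
    by (simp add: sum.distrib flip: sum_distrib_left)
  finally show ?case by (simp only: binom_transform_Suc)
qed

lemma binom_transform_diff:
  "binom_transform m (\<lambda>s. H s - K s) = binom_transform m H - binom_transform m K"
  unfolding binom_transform_def by (simp add: sum_subtractf algebra_simps)

lemma binom_transform_add: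
  "binom_transform m (\<lambda>s. H s + K s) = binom_transform m H + binom_transform m K"
  unfolding binom_transform_def by (simp add: sum.distrib algebra_simps)

lemma binom_transform_mult_left:
  "binom_transform m (\<lambda>s. c * H s) = c * binom_transform m H"
  unfolding binom_transform_def by (simp add: sum_distrib_left algebra_simps)

lemma binom_transform_Suc_Suc:
  "binom_transform (Suc (Suc m)) H = 4 * binom_transform m H
     + 2 * \<i> * (binom_transform m (\<lambda>s. H (s + 2)) - binom_transform m (\<lambda>s. H (s - 2)))"
proof -
  have "binom_transform (Suc (Suc m)) H =
      (1 + \<i>) * ((1 + \<i>) * binom_transform m (\<lambda>s. H (s + 1 + 1)) + (1 - \<i>) * binom_transform m (\<lambda>s. H (s - 1 + 1)))
    + (1 - \<i>) * ((1 + \<i>) * binom_transform m (\<lambda>s. H (s + 1 - 1)) + (1 - \<i>) * binom_transform m (\<lambda>s. H (s - 1 - 1)))"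
    by (simp only: binom_transform_Suc)
  then show ?thesis by (simp add: algebra_simps)
qed

lemma norm_binom_transform_le:
  assumes "\<And>p. p \<le> m \<Longrightarrow> cmod (H (2 * real p - real m)) \<le> \<epsilon>"
  shows "cmod (binom_transform m H) \<le> 2 ^ m * sqrt 2 ^ m * \<epsilon>"
proof -
  have "cmod (binom_transform m H)
      \<le> (\<Sum>p\<le>m. cmod (of_nat (m choose p) * (1 + \<i>) ^ p * (1 - \<i>) ^ (m - p) * H (2 * real p - real m)))"
    unfolding binom_transform_def by (rule norm_sum)
  also have "\<dots> \<le> (\<Sum>p\<le>m. real (m choose p) * sqrt 2 ^ m * \<epsilon>)"
  proof (intro sum_mono)
    fix p assume "p \<in> {..m}"
    moreover have "cmod (1 + \<i>) = sqrt 2" "cmod (1 - \<i>) = sqrt 2"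
      by (simp_all add: cmod_def)
    ultimately have "cmod ((1 + \<i>) ^ p * (1 - \<i>) ^ (m - p)) = sqrt 2 ^ m"
      by (simp add: norm_mult norm_power flip: power_add)
    then have "cmod (of_nat (m choose p) * (1 + \<i>) ^ p * (1 - \<i>) ^ (m - p) * H (2 * real p - real m))
        = real (m choose p) * sqrt 2 ^ m * cmod (H (2 * real p - real m))"
      by (simp add: norm_mult mult.assoc)
    also have "\<dots> \<le> real (m choose p) * sqrt 2 ^ m * \<epsilon>"
      using assms \<open>p \<in> {..m}\<close> by (intro mult_left_mono) auto
    finally show "cmod (of_nat (m choose p) * (1 + \<i>) ^ p * (1 - \<i>) ^ (m - p) * H (2 * real p - real m))
        \<le> real (m choose p) * sqrt 2 ^ m * \<epsilon>" .
  qed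
  also have "\<dots> = 2 ^ m * sqrt 2 ^ m * \<epsilon>"
    by (simp add: choose_row_sum flip: sum_distrib_right of_nat_sum)
  finally show ?thesis .
qed

section \<open>The transform of the sign function\<close>

definition csgn :: "real \<Rightarrow> complex" where
  "csgn s = of_real (sgn s)"

lemma csgn_shift_diff_lattice:
  "csgn (2 * real p - real (2 * n) + 2) - csgn (2 * real p - real (2 * n) - 2) =
     (if p = n then 2 else 0) + (if Suc p = n then 1 else 0) + (if p = Suc n then 1 else 0)"
proof -
  consider "p + 2 \<le> n" | "Suc p = n" | "p = n" | "p = Suc n" | "n + 2 \<le> p" by linarith
  then show ?thesis by cases (auto simp: csgn_def sgn_if)
qed

lemma binom_transform_csgn_shift_diff:
  "binom_transform (2 * n) (\<lambda>s. csgn (s + 2)) - binom_transform (2 * n) (\<lambda>s. csgn (s - 2))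
     = 2 * 2 ^ n * of_nat (2 * n choose n)"
proof (cases n)
  case 0
  then show ?thesis by (simp add: binom_transform_def csgn_def)
next
  case (Suc k)
  define a where "a p = of_nat (2 * n choose p) * (1 + \<i>) ^ p * (1 - \<i>) ^ (2 * n - p)" for p
  have "binom_transform (2 * n) (\<lambda>s. csgn (s + 2)) - binom_transform (2 * n) (\<lambda>s. csgn (s - 2))
      = binom_transform (2 * n) (\<lambda>s. csgn (s + 2) - csgn (s - 2))"
    by (rule binom_transform_diff[symmetric])
  also have "\<dots> = (\<Sum>p\<le>2 * n.
      a p * ((if p = n then 2 else 0) + (if Suc p = n then 1 else 0) + (if p = Suc n then 1 else 0)))"
    unfolding binom_transform_def a_def by (simp only: csgn_shift_diff_lattice)
  also have "\<dots> = (\<Sum>p\<le>2 * n. if p = n then 2 * a p else 0) + (\<Sum>p\<le>2 * n. if p = k then a p else 0)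
      + (\<Sum>p\<le>2 * n. if p = Suc n then a p else 0)"
    unfolding sum.distrib[symmetric] by (rule sum.cong) (auto simp: Suc)
  also have "\<dots> = 2 * a n + (a k + a (Suc n))"
  proof -
    have "k \<le> 2 * n" "Suc n \<le> 2 * n" using Suc by simp_all
    then show ?thesis by (simp add: sum.delta)
  qed
  also have "a k + a (Suc n) = 0"
  proof -
    have "(2 * n choose Suc n) = (2 * n choose k)" "2 * n - k = Suc (Suc k)" "2 * n - Suc n = k"
      using binomial_symmetric[of k "2 * n"] Suc by simp_all
    then have "a k + a (Suc n)
        = of_nat (2 * n choose k) * (1 + \<i>) ^ k * (1 - \<i>) ^ k * ((1 - \<i>)\<^sup>2 + (1 + \<i>)\<^sup>2)"
      unfolding a_def Suc by (simp add: power2_eq_square algebra_simps)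
    also have "(1 - \<i>)\<^sup>2 + (1 + \<i>)\<^sup>2 = 0" by (simp add: power2_eq_square algebra_simps)
    finally show ?thesis by simp
  qed
  also have "(1 + \<i>) ^ n * (1 - \<i>) ^ n = 2 ^ n"
    by (simp add: algebra_simps flip: power_mult_distrib)
  then have "a n = 2 ^ n * of_nat (2 * n choose n)"
    by (simp add: a_def mult.assoc)
  finally show ?thesis by simp
qed

fun sgn_transform_im :: "nat \<Rightarrow> real" where
  "sgn_transform_im 0 = 0"
| "sgn_transform_im (Suc n) = 4 * sgn_transform_im n + 2 ^ (n + 2) * real (2 * n choose n)"

lemma binom_transform_csgn: "binom_transform (2 * n) csgn = \<i> * of_real (sgn_transform_im n)"
proof (induction n)
  case 0
  then show ?case by (simp add: binom_transform_def csgn_def)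
next
  case (Suc n)
  have "binom_transform (2 * Suc n) csgn = binom_transform (Suc (Suc (2 * n))) csgn" by simp
  also have "\<dots> = 4 * binom_transform (2 * n) csgn
      + 2 * \<i> * (binom_transform (2 * n) (\<lambda>s. csgn (s + 2)) - binom_transform (2 * n) (\<lambda>s. csgn (s - 2)))"
    by (rule binom_transform_Suc_Suc)
  also have "\<dots> = \<i> * of_real (sgn_transform_im (Suc n))"
    unfolding Suc.IH binom_transform_csgn_shift_diff by (simp add: algebra_simps)
  finally show ?case .
qed

lemma sgn_transform_im_nonneg: "0 \<le> sgn_transform_im n"
  by (induction n) auto

lemma central_binomial_Suc: "(2 * Suc k choose Suc k) * Suc k = 2 * (2 * k + 1) * (2 * k choose k)"
proof -
  have "(2 * Suc k choose Suc k) * Suc k = 2 * (Suc k * (2 * k + 1 choose k))"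
    using Suc_times_binomial_eq[of "2 * k + 1" k] by simp
  also have "Suc k * (2 * k + 1 choose k) = (2 * k + 1) * (2 * k choose k)"
    using Suc_times_binomial_eq[of "2 * k" k] binomial_symmetric[of k "2 * k + 1"] by simp
  finally show ?thesis by simp
qed

lemma central_binomial_sq_ge: "16 ^ k \<le> real (2 * k choose k) ^ 2 * (4 * real k + 1)"
proof (induction k)
  case 0
  then show ?case by simp
next
  case (Suc k)
  define c where "c = real (2 * k choose k)"
  define c' where "c' = real (2 * Suc k choose Suc k)"
  have rec: "c' * (real k + 1) = 2 * (2 * real k + 1) * c"
    using arg_cong[OF central_binomial_Suc[of k], of real] by (simp add: c_def c'_def algebra_simps)
  have "(real k + 1) ^ 2 * 16 ^ Suc k \<le> 16 * (real k + 1) ^ 2 * (c ^ 2 * (4 * real k + 1))"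
    using Suc.IH by (simp add: c_def)
  also have "\<dots> \<le> 4 * (2 * real k + 1) ^ 2 * (4 * real k + 5) * c ^ 2"
  proof -
    have "4 * (real k + 1) ^ 2 * (4 * real k + 1) \<le> (2 * real k + 1) ^ 2 * (4 * real k + 5)"
      by (simp add: power2_eq_square algebra_simps)
    from mult_right_mono[OF this, of "4 * c ^ 2"] show ?thesis by (simp add: algebra_simps)
  qed
  also have "\<dots> = (c' * (real k + 1)) ^ 2 * (4 * real k + 5)"
    unfolding rec by (simp add: power2_eq_square algebra_simps)
  finally have "(real k + 1) ^ 2 * 16 ^ Suc k \<le> (real k + 1) ^ 2 * (c' ^ 2 * (4 * real k + 5))"
    by (simp only: power_mult_distrib mult_ac)
  then have "16 ^ Suc k \<le> c' ^ 2 * (4 * real k + 5)"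
    by (rule mult_left_le_imp_le) auto
  then show ?case by (simp add: c'_def algebra_simps)
qed

lemma sgn_transform_im_Suc_ge: "2 ^ (k + 2) * 4 ^ k \<le> sgn_transform_im (Suc k) * sqrt (4 * real k + 1)"
proof -
  have "(4 ^ k) ^ 2 = (16::real) ^ k"
    by (simp add: power2_eq_square flip: power_mult_distrib)
  also have "\<dots> \<le> (real (2 * k choose k) * sqrt (4 * real k + 1)) ^ 2"
    using central_binomial_sq_ge[of k] by (simp add: power_mult_distrib)
  finally have "(4 ^ k) ^ 2 \<le> (real (2 * k choose k) * sqrt (4 * real k + 1)) ^ 2" .
  then have "4 ^ k \<le> real (2 * k choose k) * sqrt (4 * real k + 1)"
    by (rule power2_le_imp_le) simp
  then have "2 ^ (k + 2) * 4 ^ k \<le> 2 ^ (k + 2) * real (2 * k choose k) * sqrt (4 * real k + 1)"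
    by (simp add: mult.assoc)
  also have "\<dots> \<le> sgn_transform_im (Suc k) * sqrt (4 * real k + 1)"
    using sgn_transform_im_nonneg[of k] by (intro mult_right_mono) auto
  finally show ?thesis .
qed

section \<open>Approximating \<rho> by the absolute value\<close>

lemma rho_minus [simp]: "rho (- t) = rho t"
  unfolding rho_def by (simp add: add.commute)

lemma rho_minus_abs_bounds: "0 \<le> rho t - \<bar>t\<bar>" "rho t - \<bar>t\<bar> \<le> exp (- 2 * \<bar>t\<bar>)"
proof -
  have "exp t + exp (- t) = exp \<bar>t\<bar> * (1 + exp (- 2 * \<bar>t\<bar>))"
    by (cases "t \<ge> 0") (simp_all add: algebra_simps flip: exp_add)
  moreover have "0 < 1 + exp (- 2 * \<bar>t\<bar>)"
    by (simp add: add_pos_pos)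
  ultimately have "rho t - \<bar>t\<bar> = ln (1 + exp (- 2 * \<bar>t\<bar>))"
    unfolding rho_def by (simp add: ln_mult)
  then show "0 \<le> rho t - \<bar>t\<bar>" "rho t - \<bar>t\<bar> \<le> exp (- 2 * \<bar>t\<bar>)"
    by (simp_all add: ln_add_one_self_le_self)
qed

lemma rho_diff_approx:
  assumes "0 \<le> w" "w \<le> t1" "w \<le> t2"
  shows "\<bar>rho t1 - rho t2 - (t1 - t2)\<bar> \<le> exp (- 2 * w)"
proof -
  have "0 \<le> rho t - t \<and> rho t - t \<le> exp (- 2 * w)" if "w \<le> t" for t
  proof -
    have "\<bar>t\<bar> = t" using that assms(1) by simp
    moreover have "exp (- 2 * t) \<le> exp (- 2 * w)" using that by simp
    ultimately show ?thesis using rho_minus_abs_bounds[of t] by (metis order_trans)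
  qed
  from this[OF assms(2)] this[OF assms(3)] show ?thesis
    unfolding abs_le_iff by linarith
qed

lemma rho_odd_step_approx:
  fixes k :: int
  assumes "0 \<le> w"
  shows "\<bar>rho (w * (2 * of_int k + 1)) - rho (w * (2 * of_int k - 1)) - 2 * w * sgn (of_int k)\<bar> \<le> exp (- 2 * w)"
proof -
  have pos: "\<bar>rho (w * (2 * of_int k + 1)) - rho (w * (2 * of_int k - 1)) - 2 * w\<bar> \<le> exp (- 2 * w)"
    if "1 \<le> k" for k :: int
  proof -
    have "w \<le> w * (2 * of_int k + 1)" "w \<le> w * (2 * of_int k - 1)"
      using assms that by (simp_all add: mult_le_cancel_left1)
    from rho_diff_approx[OF assms this]
    show ?thesis by (simp add: algebra_simps)
  qed
  consider "k = 0" | "1 \<le> k" | "1 \<le> - k" by linarith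
  then show ?thesis
  proof cases
    case 1
    then show ?thesis by simp
  next
    case 2
    then show ?thesis using pos[of k] by simp
  next
    case 3
    have "- (w * (2 * of_int k + 1)) = w * (2 * of_int (- k) - 1)"
      "- (w * (2 * of_int k - 1)) = w * (2 * of_int (- k) + 1)"
      by (simp_all add: algebra_simps)
    then have "rho (w * (2 * of_int k + 1)) = rho (w * (2 * of_int (- k) - 1))"
      "rho (w * (2 * of_int k - 1)) = rho (w * (2 * of_int (- k) + 1))"
      by (metis rho_minus)+
    then show ?thesis using pos[of "- k"] 3 by (simp add: algebra_simps)
  qed
qed

section \<open>Phased Fourier sums\<close>

lemma subsets_containing_last_eq: "{T. T \<subseteq> {0..<Suc m} \<and> m \<in> T} = insert m ` Pow {..<m}"
proof (intro set_eqI iffI)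
  fix T assume "T \<in> {T. T \<subseteq> {0..<Suc m} \<and> m \<in> T}"
  then have "T = insert m (T - {m})" "T - {m} \<in> Pow {..<m}" by auto
  then show "T \<in> insert m ` Pow {..<m}" by blast
qed auto

lemma sum_phased_monomials:
  "(\<Sum>T | T \<subseteq> {0..<Suc m} \<and> m \<in> T. \<i> ^ (card T - 1) * of_real (\<Prod>i\<in>T. x i))
     = of_real (x m) * (\<Prod>j<m. 1 + \<i> * of_real (x j))"
proof -
  have "inj_on (insert m) (Pow {..<m})"
    by (intro inj_onI) (metis insert_ident PowD lessThan_iff less_irrefl subsetD)
  then have "(\<Sum>T | T \<subseteq> {0..<Suc m} \<and> m \<in> T. \<i> ^ (card T - 1) * of_real (\<Prod>i\<in>T. x i))
     = (\<Sum>S\<in>Pow {..<m}. \<i> ^ (card (insert m S) - 1) * of_real (\<Prod>i\<in>insert m S. x i))"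
    unfolding subsets_containing_last_eq by (simp add: sum.reindex)
  also have "\<dots> = (\<Sum>S\<in>Pow {..<m}. of_real (x m) * ((\<Prod>j\<in>S. \<i> * of_real (x j)) * (\<Prod>j\<in>{..<m} - S. 1)))"
  proof (intro sum.cong refl)
    fix S assume "S \<in> Pow {..<m}"
    then have "finite S" "m \<notin> S" by (auto intro: finite_subset)
    then show "\<i> ^ (card (insert m S) - 1) * of_real (\<Prod>i\<in>insert m S. x i) =
      of_real (x m) * ((\<Prod>j\<in>S. \<i> * of_real (x j)) * (\<Prod>j\<in>{..<m} - S. 1))"
      by (simp add: prod.distrib)
  qed
  also have "\<dots> = of_real (x m) * (\<Prod>j<m. \<i> * of_real (x j) + 1)"
    by (simp add: prod_add sum_distrib_left)
  finally show ?thesis by (simp add: add.commute)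
qed

lemma sum_phased_fourier_coeff:
  "(\<Sum>T | T \<subseteq> {0..<Suc m} \<and> m \<in> T. \<i> ^ (card T - 1) * of_real (fourier_coeff (Suc m) f T))
   = (\<Sum>x\<in>hcube (Suc m). of_real (f x) * (of_real (x m) * (\<Prod>j<m. 1 + \<i> * of_real (x j)))) / 2 ^ Suc m"
proof -
  have "(\<Sum>T | T \<subseteq> {0..<Suc m} \<and> m \<in> T. \<i> ^ (card T - 1) * of_real (fourier_coeff (Suc m) f T))
     = (\<Sum>T | T \<subseteq> {0..<Suc m} \<and> m \<in> T. \<Sum>x\<in>hcube (Suc m).
          \<i> ^ (card T - 1) * (of_real (f x) * of_real (\<Prod>i\<in>T. x i))) / 2 ^ Suc m"
    unfolding fourier_coeff_def by (simp add: sum_divide_distrib sum_distrib_left)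
  also have "\<dots> = (\<Sum>x\<in>hcube (Suc m). of_real (f x) *
      (\<Sum>T | T \<subseteq> {0..<Suc m} \<and> m \<in> T. \<i> ^ (card T - 1) * of_real (\<Prod>i\<in>T. x i))) / 2 ^ Suc m"
    by (subst sum.swap) (simp add: sum_distrib_left algebra_simps)
  finally show ?thesis by (simp only: sum_phased_monomials)
qed

lemma norm_sum_phased_fourier_coeff_le_mrf_width:
  assumes "u < n"
  shows "cmod (\<Sum>T | T \<subseteq> {0..<n} \<and> u \<in> T. \<i> ^ (card T - 1) * of_real (fourier_coeff n f T))
    \<le> mrf_width n f"
proof -
  have "cmod (\<Sum>T | T \<subseteq> {0..<n} \<and> u \<in> T. \<i> ^ (card T - 1) * of_real (fourier_coeff n f T))
      \<le> (\<Sum>T | T \<subseteq> {0..<n} \<and> u \<in> T. \<bar>fourier_coeff n f T\<bar>)"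
    by (rule order_trans[OF norm_sum]) (simp add: norm_mult norm_power)
  also have "\<dots> \<le> mrf_width n f"
    unfolding mrf_width_def using assms by (intro Max_ge) auto
  finally show ?thesis .
qed

lemma sum_phased_fourier_coeff_rho_linear:
  "(\<Sum>T | T \<subseteq> {0..<Suc m} \<and> m \<in> T.
      \<i> ^ (card T - 1) * of_real (fourier_coeff (Suc m) (\<lambda>x. rho (\<Sum>i<Suc m. w * x i)) T))
   = binom_transform m (\<lambda>s. of_real (rho (w * (s + 1)) - rho (w * (s - 1)))) / 2 ^ Suc m"
proof -
  have "(\<Sum>i<Suc m. w * (y(m := b)) i) = w * ((\<Sum>j<m. y j) + b)" for y b
    using sum_lessThan_fun_upd_self[where F = "\<lambda>v. w * v"] by (simp add: sum_distrib_left algebra_simps)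
  then have "(\<Sum>x\<in>hcube (Suc m). of_real (rho (\<Sum>i<Suc m. w * x i)) * (of_real (x m) * (\<Prod>j<m. 1 + \<i> * of_real (x j))))
      = (\<Sum>y\<in>hcube m. of_real (rho (w * ((\<Sum>j<m. y j) + 1)) - rho (w * ((\<Sum>j<m. y j) - 1)))
          * (\<Prod>j<m. 1 + \<i> * of_real (y j)))"
    unfolding sum_hcube_Suc prod_lessThan_fun_upd_self by (simp add: algebra_simps)
  also have "\<dots> = binom_transform m (\<lambda>s. of_real (rho (w * (s + 1)) - rho (w * (s - 1))))"
    by (rule sum_hcube_eq_binom_transform)
  finally show ?thesis by (simp only: sum_phased_fourier_coeff)
qed

lemma norm_binom_transform_rho_step_error:
  assumes "0 \<le> w"
  shows "cmod (binom_transform (2 * n)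
      (\<lambda>s. of_real (rho (w * (s + 1)) - rho (w * (s - 1))) - of_real (2 * w) * csgn s))
    \<le> 8 ^ n * exp (- 2 * w)"
proof -
  have "cmod (of_real (rho (w * (s + 1)) - rho (w * (s - 1))) - of_real (2 * w) * csgn s) \<le> exp (- 2 * w)"
    if "s = 2 * real p - real (2 * n)" for s p
  proof -
    define k where "k = int p - int n"
    have "s = 2 * of_int k" using that by (simp add: k_def)
    then have "of_real (rho (w * (s + 1)) - rho (w * (s - 1))) - of_real (2 * w) * csgn s
        = complex_of_real (rho (w * (2 * of_int k + 1)) - rho (w * (2 * of_int k - 1)) - 2 * w * sgn (of_int k))"
      by (simp add: csgn_def sgn_mult)
    then show ?thesis using rho_odd_step_approx[OF assms, of k] by (simp only: norm_of_real)
  qed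
  then have "cmod (binom_transform (2 * n)
      (\<lambda>s. of_real (rho (w * (s + 1)) - rho (w * (s - 1))) - of_real (2 * w) * csgn s))
    \<le> 2 ^ (2 * n) * sqrt 2 ^ (2 * n) * exp (- 2 * w)"
    by (intro norm_binom_transform_le) blast
  also have "2 ^ (2 * n) * sqrt 2 ^ (2 * n) = (8::real) ^ n"
    by (simp add: power_mult flip: power_mult_distrib)
  finally show ?thesis .
qed

lemma mrf_width_rho_linear_ge:
  assumes "0 \<le> w"
  shows "(2 * w * sgn_transform_im n - 8 ^ n * exp (- 2 * w)) / 2 ^ Suc (2 * n)
    \<le> mrf_width (Suc (2 * n)) (\<lambda>x. rho (\<Sum>i<Suc (2 * n). w * x i))"
proof -
  define D :: "real \<Rightarrow> complex" where "D = (\<lambda>s. of_real (rho (w * (s + 1)) - rho (w * (s - 1))))"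
  define E where "E = (\<lambda>s. D s - of_real (2 * w) * csgn s)"
  have E_bound: "cmod (binom_transform (2 * n) E) \<le> 8 ^ n * exp (- 2 * w)"
    unfolding E_def D_def by (rule norm_binom_transform_rho_step_error[OF assms])
  have "binom_transform (2 * n) D = binom_transform (2 * n) (\<lambda>s. of_real (2 * w) * csgn s + E s)"
    by (simp add: E_def)
  also have "\<dots> = of_real (2 * w) * (\<i> * of_real (sgn_transform_im n)) + binom_transform (2 * n) E"
    by (simp add: binom_transform_add binom_transform_mult_left binom_transform_csgn)
  finally have D_split: "binom_transform (2 * n) D
      = of_real (2 * w) * (\<i> * of_real (sgn_transform_im n)) + binom_transform (2 * n) E" .
  have "2 * w * sgn_transform_im n = cmod (of_real (2 * w) * (\<i> * of_real (sgn_transform_im n)))"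
    using assms sgn_transform_im_nonneg[of n] by (simp add: norm_mult)
  also have "\<dots> \<le> cmod (binom_transform (2 * n) D) + cmod (binom_transform (2 * n) E)"
    using norm_triangle_ineq4[of "binom_transform (2 * n) D" "binom_transform (2 * n) E"]
    by (simp add: D_split)
  finally have "(2 * w * sgn_transform_im n - 8 ^ n * exp (- 2 * w)) / 2 ^ Suc (2 * n)
      \<le> cmod (binom_transform (2 * n) D) / 2 ^ Suc (2 * n)"
    using E_bound by (intro divide_right_mono) auto
  also have "\<dots> = cmod (\<Sum>T | T \<subseteq> {0..<Suc (2 * n)} \<and> 2 * n \<in> T.
      \<i> ^ (card T - 1) * of_real (fourier_coeff (Suc (2 * n)) (\<lambda>x. rho (\<Sum>i<Suc (2 * n). w * x i)) T))"
    unfolding sum_phased_fourier_coeff_rho_linear D_def by (simp add: norm_divide norm_power)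
  also have "\<dots> \<le> mrf_width (Suc (2 * n)) (\<lambda>x. rho (\<Sum>i<Suc (2 * n). w * x i))"
    by (rule norm_sum_phased_fourier_coeff_le_mrf_width) simp
  finally show ?thesis .
qed

section \<open>One latent unit with uniform coupling\<close>

lemma rbm_width_uniform_coupling:
  assumes "0 < d" "0 \<le> w"
  shows "rbm_width d 1 (\<lambda>_ _. w) (\<lambda>_. 0) (\<lambda>_. 0) = real d * w"
  using assms by (simp add: rbm_width_def image_constant_conv lessThan_empty_iff max_def mult_le_cancel_right1)

lemma rbm_marginal_uniform_coupling:
  "rbm_marginal d 1 (\<lambda>_ _. w) (\<lambda>_. 0) (\<lambda>_. 0) = (\<lambda>x. rho (\<Sum>i<d. w * x i))"
  by (simp add: rbm_marginal_def fun_eq_iff)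

lemma exp_le_sqrt_gap:
  fixes k :: nat and w :: real
  assumes "1 \<le> k" and w: "ln (2 * real k + 3) \<le> w"
  shows "w / (2 * sqrt (2 * real k + 3)) + exp (- 2 * w) \<le> w / sqrt (4 * real k + 1)"
proof -
  define d where "d = 2 * real k + 3"
  define a where "a = sqrt (4 * real k + 1)"
  have d5: "5 \<le> d" using assms(1) by (simp add: d_def)
  have a: "0 < a" "a \<le> d" "2 * a \<le> 3 * sqrt d"
  proof -
    show "0 < a" by (simp add: a_def)
    have "a ^ 2 \<le> d ^ 2" "(2 * a) ^ 2 \<le> (3 * sqrt d) ^ 2"
      using d5 by (simp_all add: a_def d_def power2_eq_square algebra_simps)
    then show "a \<le> d" "2 * a \<le> 3 * sqrt d"
      using d5 by (auto intro: power2_le_imp_le)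
  qed
  have "4 / 5 \<le> w"
  proof -
    have "1 - 1 / d \<le> ln d"
      using ln_le_minus_one[of "1 / d"] d5 by (simp add: ln_div)
    moreover have "1 / d \<le> 1 / 5" using d5 by (simp add: field_simps)
    ultimately show ?thesis using w unfolding d_def by linarith
  qed
  have "exp (- 2 * w) \<le> exp (- 2 * ln d)" using w by (simp add: d_def)
  also have "\<dots> = 1 / d ^ 2"
  proof -
    have "2 * ln d = ln (d ^ 2)" using d5 by (simp add: ln_realpow)
    then show ?thesis using d5 by (simp add: exp_minus inverse_eq_divide)
  qed
  also have "\<dots> \<le> (4 / 5) / (4 * d)" using d5 by (simp add: field_simps power2_eq_square)
  also have "\<dots> \<le> w / (4 * a)" using \<open>4 / 5 \<le> w\<close> a d5 by (intro frac_le) auto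
  finally have "exp (- 2 * w) \<le> w / (4 * a)" .
  moreover have "w / (2 * sqrt d) \<le> w / (2 * (2 / 3 * a))"
    using a \<open>4 / 5 \<le> w\<close> by (intro divide_left_mono mult_left_mono) auto
  moreover have "w / (2 * (2 / 3 * a)) = w / a - w / (4 * a)"
    using a by (simp add: field_simps)
  ultimately show ?thesis by (simp add: a_def d_def)
qed

lemma mrf_width_lower_bound_arith:
  fixes k :: nat and w r :: real
  assumes "1 \<le> k" and w: "ln (2 * real k + 3) \<le> w"
    and r: "2 ^ (k + 2) * 4 ^ k \<le> r * sqrt (4 * real k + 1)"
  shows "w * 2 ^ Suc k / (4 * sqrt (2 * real k + 3))
    \<le> (2 * w * r - 8 ^ Suc k * exp (- 2 * w)) / 2 ^ Suc (2 * Suc k)"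
proof -
  define a where "a = sqrt (4 * real k + 1)"
  define X :: real where "X = 2 ^ k"
  have "0 < a" by (simp add: a_def)
  have "0 \<le> w" using w ln_ge_zero[of "2 * real k + 3"] by linarith
  have "w * 2 ^ Suc k / (4 * sqrt (2 * real k + 3)) = X * (w / (2 * sqrt (2 * real k + 3)))"
    by (simp add: X_def)
  also have "\<dots> \<le> X * (w / a - exp (- 2 * w))"
    using exp_le_sqrt_gap[OF assms(1,2)] by (intro mult_left_mono) (auto simp: X_def a_def)
  also have "\<dots> = (2 * w * (4 * X ^ 3 / a) - 8 * X ^ 3 * exp (- 2 * w)) / (8 * X ^ 2)"
    using \<open>0 < a\<close> by (simp add: X_def field_simps power2_eq_square power3_eq_cube)
  also have "\<dots> \<le> (2 * w * r - 8 * X ^ 3 * exp (- 2 * w)) / (8 * X ^ 2)"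
  proof -
    have "2 ^ (k + 2) * 4 ^ k = 4 * X ^ 3"
      by (simp add: X_def power3_eq_cube power_add flip: power_mult_distrib)
    with r \<open>0 < a\<close> have "4 * X ^ 3 / a \<le> r" by (simp add: a_def pos_divide_le_eq)
    then have "2 * w * (4 * X ^ 3 / a) \<le> 2 * w * r"
      using \<open>0 \<le> w\<close> by (intro mult_left_mono) auto
    then show ?thesis by (intro divide_right_mono diff_right_mono) (auto simp: X_def)
  qed
  also have "8 * X ^ 3 = 8 ^ Suc k"
    by (simp add: X_def power3_eq_cube flip: power_mult_distrib)
  also have "8 * X ^ 2 = 2 ^ Suc (2 * Suc k)"
    by (simp add: X_def power2_eq_square power_mult_distrib flip: power_add)
  finally show ?thesis .
qed

theorem lemma26:
  fixes d :: nat and \<beta> :: real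
  assumes "d \<ge> 5" and "d mod 4 = 1" and "\<beta> \<ge> real d * ln (real d)"
  shows "\<exists>(J :: nat \<Rightarrow> nat \<Rightarrow> real) (h :: nat \<Rightarrow> real) (g :: nat \<Rightarrow> real).
           rbm_width d 1 J h g = \<beta> \<and>
           mrf_width d (rbm_marginal d 1 J h g)
             \<ge> \<beta> * 2 ^ ((d - 1) div 2) / (4 * real d powr (3/2))"
proof -
  \<comment> \<open>only the oddness of d is needed\<close>
  have "\<exists>k. d = Suc (2 * Suc k) \<and> 1 \<le> k" using assms(1,2) by presburger
  then obtain k where d: "d = Suc (2 * Suc k)" and k: "1 \<le> k" by blast
  then have dk: "real d = 2 * real k + 3" by simp
  define w where "w = \<beta> / real d"
  have \<beta>: "\<beta> = real d * w" using dk by (simp add: w_def)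
  have w: "ln (2 * real k + 3) \<le> w" using assms(3) dk by (simp add: w_def field_simps)
  then have "0 \<le> w" using ln_ge_zero[of "2 * real k + 3"] by linarith
  have "rbm_width d 1 (\<lambda>_ _. w) (\<lambda>_. 0) (\<lambda>_. 0) = \<beta>"
    using rbm_width_uniform_coupling[OF _ \<open>0 \<le> w\<close>] \<beta> d by simp
  moreover have "\<beta> * 2 ^ ((d - 1) div 2) / (4 * real d powr (3/2))
      \<le> mrf_width d (rbm_marginal d 1 (\<lambda>_ _. w) (\<lambda>_. 0) (\<lambda>_. 0))"
  proof -
    have "real d powr (3/2) = real d powr (1 + 1/2)" by simp
    also have "\<dots> = real d * sqrt (real d)" by (subst powr_add) (simp add: powr_half_sqrt)
    finally have "\<beta> * 2 ^ ((d - 1) div 2) / (4 * real d powr (3/2)) = w * 2 ^ Suc k / (4 * sqrt (2 * real k + 3))"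
      using dk by (simp add: \<beta> d)
    also have "\<dots> \<le> (2 * w * sgn_transform_im (Suc k) - 8 ^ Suc k * exp (- 2 * w)) / 2 ^ Suc (2 * Suc k)"
      using k w sgn_transform_im_Suc_ge by (rule mrf_width_lower_bound_arith)
    also have "\<dots> \<le> mrf_width d (\<lambda>x. rho (\<Sum>i<d. w * x i))"
      unfolding d by (rule mrf_width_rho_linear_ge[OF \<open>0 \<le> w\<close>])
    finally show ?thesis by (simp only: rbm_marginal_uniform_coupling)
  qed
  ultimately show ?thesis by blast
qed

end
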